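(* Let $\mathcal{A}\in\mathcal{T}'_6$ with $c_{13}^4=c_{14}^5=c_{15}^6=c_{24}^5=c_{25}^6=c_{14}^6=c_{24}^6=c_{13}^6=0$ and $c_{13}^5c_{35}^6\ne0$. Then the automorphisms of $\mathcal{A}$ are exactly the linear maps $\varphi$ given by $\varphi(e_1)=xe_1+a_{61}e_6$, $\varphi(e_2)=e_2+a_{62}e_6$, $\varphi(e_3)=xe_3$, $\varphi(e_4)=xe_4$, $\varphi(e_5)=x^2e_5$, $\varphi(e_6)=x^3e_6$, with $x\in\mathbb{C}^*$ and $a_{61},a_{62}\in\mathbb{C}$.
   Context: Over $\mathbb{C}$, basis $e_1,\dots,e_n$, $e_ie_j=\sum_kc_{ij}^ke_k$. For $n\ge3$, $\mathcal{T}'_n$ is the family of anticommutative algebra structures with $c_{ij}^k=0$ whenever $k\le\max\{i,j\}$ and $e_ie_{i+1}=e_{i+2}$ for $1\le i\le n-2$, other structure constants arbitrary subject to these and anticommutativity. *)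

theory Defs
  imports Complex_Main
begin

text \<open>Algebras on C^n with basis e_1..e_n; vectors are coordinate functions
  nat => complex supported on {1..n}; structure constants c i j k means c_{ij}^k.\<close>

definition vecs :: "nat \<Rightarrow> (nat \<Rightarrow> complex) set" where
  "vecs n = {v. \<forall>k. k \<notin> {1..n} \<longrightarrow> v k = 0}"

definition basis_vec :: "nat \<Rightarrow> nat \<Rightarrow> complex" where
  "basis_vec i = (\<lambda>k. if k = i then 1 else 0)"

definition alg_mult :: "nat \<Rightarrow> (nat \<Rightarrow> nat \<Rightarrow> nat \<Rightarrow> complex)
    \<Rightarrow> (nat \<Rightarrow> complex) \<Rightarrow> (nat \<Rightarrow> complex) \<Rightarrow> (nat \<Rightarrow> complex)" where
  "alg_mult n c u v = (\<lambda>k. if k \<in> {1..n}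
       then (\<Sum>i=1..n. \<Sum>j=1..n. u i * v j * c i j k) else 0)"

definition in_Tprime :: "nat \<Rightarrow> (nat \<Rightarrow> nat \<Rightarrow> nat \<Rightarrow> complex) \<Rightarrow> bool" where
  "in_Tprime n c \<longleftrightarrow> n \<ge> 3 \<and>
     (\<forall>i\<in>{1..n}. \<forall>j\<in>{1..n}. \<forall>k\<in>{1..n}. c i j k = - c j i k) \<and>
     (\<forall>i\<in>{1..n}. \<forall>j\<in>{1..n}. \<forall>k\<in>{1..n}. k \<le> max i j \<longrightarrow> c i j k = 0) \<and>
     (\<forall>i. 1 \<le> i \<and> i \<le> n - 2 \<longrightarrow>
        (\<forall>k\<in>{1..n}. c i (i+1) k = (if k = i + 2 then 1 else 0)))"

definition linear_on_vecs :: "nat \<Rightarrow> ((nat \<Rightarrow> complex) \<Rightarrow> (nat \<Rightarrow> complex)) \<Rightarrow> bool" where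
  "linear_on_vecs n \<phi> \<longleftrightarrow>
     (\<forall>u\<in>vecs n. \<forall>v\<in>vecs n. \<phi> (\<lambda>k. u k + v k) = (\<lambda>k. \<phi> u k + \<phi> v k)) \<and>
     (\<forall>a::complex. \<forall>u\<in>vecs n. \<phi> (\<lambda>k. a * u k) = (\<lambda>k. a * \<phi> u k))"

definition is_automorphism :: "nat \<Rightarrow> (nat \<Rightarrow> nat \<Rightarrow> nat \<Rightarrow> complex)
    \<Rightarrow> ((nat \<Rightarrow> complex) \<Rightarrow> (nat \<Rightarrow> complex)) \<Rightarrow> bool" where
  "is_automorphism n c \<phi> \<longleftrightarrow> linear_on_vecs n \<phi> \<and> bij_betw \<phi> (vecs n) (vecs n) \<and>
     (\<forall>u\<in>vecs n. \<forall>v\<in>vecs n. \<phi> (alg_mult n c u v) = alg_mult n c (\<phi> u) (\<phi> v))"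

end

(*
  Under the hypotheses the only nonzero products of basis vectors are e1 e2 = e3, e2 e3 = e4,
  e3 e4 = e5, e4 e5 = e6, e1 e3 = alpha e5 and e3 e5 = beta e6, with alpha beta nonzero.
  Because e(i+2) = e(i) e(i+1), an automorphism maps e3, ..., e6 into the span of later basis
  vectors, and its diagonal entries satisfy d(i+2) = d(i) d(i+1) for i >= 2.  Computing
  phi(e3) phi(e5) = beta phi(e6) against phi(e4) phi(e5) = phi(e6) gives d4 = d3, hence
  d2 = 1, d3 = d4 = d1, d5 = d1^2 and d6 = d1^3; the remaining products of basis vectors kill
  all other off-diagonal entries except the e6-coordinates of phi(e1) and phi(e2).  Conversely
  each map of this shape is invertible (with an inverse of the same shape) and preserves the
  product, as a direct computation in coordinates shows.
*)
theory Submission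
  imports Defs
begin

lemma sum_atLeastAtMost_1_6:
  "(\<Sum>i=1..6::nat. f i) = f 1 + f 2 + f 3 + f 4 + f 5 + f 6" for f :: "nat \<Rightarrow> 'a::comm_monoid_add"
  by (simp add: sum.atLeast_Suc_atMost numeral_eq_Suc add.assoc)

lemma atLeastAtMost_1_6: "{1..6::nat} = {1, 2, 3, 4, 5, 6}"
  by auto

lemma atLeastAtMost_1_6_cases:
  "k \<in> {1..6::nat} \<Longrightarrow> k = 1 \<or> k = 2 \<or> k = 3 \<or> k = 4 \<or> k = 5 \<or> k = 6"
  by auto

lemma basis_vec_in_vecs: "i \<in> {1..n} \<Longrightarrow> basis_vec i \<in> vecs n"
  by (auto simp: basis_vec_def vecs_def)

lemma vecs_eqI:
  assumes "u \<in> vecs n" and "v \<in> vecs n" and "\<And>k. k \<in> {1..n} \<Longrightarrow> u k = v k"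
  shows "u = v"
proof
  fix k
  show "u k = v k"
    using assms unfolding vecs_def by (cases "k \<in> {1..n}") auto
qed

lemma linear_on_vecs_zero:
  assumes "linear_on_vecs n \<phi>"
  shows "\<phi> (\<lambda>k. 0) = (\<lambda>k. 0)"
proof -
  have zero: "(\<lambda>k. 0::complex) \<in> vecs n" by (simp add: vecs_def)
  have "\<forall>a. \<forall>u\<in>vecs n. \<phi> (\<lambda>k. a * u k) = (\<lambda>k. a * \<phi> u k)"
    using assms unfolding linear_on_vecs_def by blast
  from this[rule_format, OF zero, of 0] show ?thesis by simp
qed

lemma linear_on_vecs_sum_basis_vec:
  assumes lin: "linear_on_vecs n \<phi>" and "finite S" and "S \<subseteq> {1..n}"
  shows "\<phi> (\<lambda>k. \<Sum>i\<in>S. u i * basis_vec i k) = (\<lambda>k. \<Sum>i\<in>S. u i * \<phi> (basis_vec i) k)"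
  using assms(2,3)
proof (induction S rule: finite_induct)
  case empty
  then show ?case using linear_on_vecs_zero[OF lin] by simp
next
  case (insert i S)
  have e: "basis_vec i \<in> vecs n" using insert.prems by (auto intro: basis_vec_in_vecs)
  then have ue: "(\<lambda>k. u i * basis_vec i k) \<in> vecs n" by (simp add: vecs_def)
  have rest: "(\<lambda>k. \<Sum>i\<in>S. u i * basis_vec i k) \<in> vecs n"
    using insert.prems unfolding vecs_def basis_vec_def by (auto intro!: sum.neutral)
  have add: "\<phi> (\<lambda>k. v k + w k) = (\<lambda>k. \<phi> v k + \<phi> w k)" if "v \<in> vecs n" "w \<in> vecs n" for v w
    using lin that unfolding linear_on_vecs_def by blast
  have scale: "\<phi> (\<lambda>k. a * v k) = (\<lambda>k. a * \<phi> v k)" if "v \<in> vecs n" for a v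
    using lin that unfolding linear_on_vecs_def by blast
  show ?case
    using insert add[OF ue rest] scale[OF e] by simp
qed

lemma vecs_eq_sum_basis_vec:
  assumes "u \<in> vecs n"
  shows "u = (\<lambda>k. \<Sum>i\<in>{1..n}. u i * basis_vec i k)"
proof
  fix k
  show "u k = (\<Sum>i\<in>{1..n}. u i * basis_vec i k)"
    using assms by (cases "k \<in> {1..n}") (auto simp: vecs_def basis_vec_def if_distrib cong: if_cong)
qed

lemma linear_on_vecs_expand:
  assumes "linear_on_vecs n \<phi>" and "u \<in> vecs n"
  shows "\<phi> u = (\<lambda>k. \<Sum>i\<in>{1..n}. u i * \<phi> (basis_vec i) k)"
  using linear_on_vecs_sum_basis_vec[OF assms(1), of "{1..n}" u] vecs_eq_sum_basis_vec[OF assms(2)]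
  by simp

lemma linear_on_vecs_eqI:
  assumes "linear_on_vecs n \<phi>" and "linear_on_vecs n \<psi>"
    and "\<And>i. i \<in> {1..n} \<Longrightarrow> \<phi> (basis_vec i) = \<psi> (basis_vec i)" and "u \<in> vecs n"
  shows "\<phi> u = \<psi> u"
  using linear_on_vecs_expand[OF assms(1,4)] linear_on_vecs_expand[OF assms(2,4)] assms(3)
  by simp

lemma alg_mult_in_vecs: "alg_mult n c u v \<in> vecs n"
  by (simp add: alg_mult_def vecs_def)

lemma is_automorphism_cong:
  assumes aut: "is_automorphism n c \<psi>" and lin: "linear_on_vecs n \<phi>"
    and eq: "\<And>u. u \<in> vecs n \<Longrightarrow> \<phi> u = \<psi> u"
  shows "is_automorphism n c \<phi>"
proof -
  have "bij_betw \<phi> (vecs n) (vecs n) = bij_betw \<psi> (vecs n) (vecs n)"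
    by (rule bij_betw_cong) (rule eq)
  moreover have "\<phi> (alg_mult n c u v) = alg_mult n c (\<phi> u) (\<phi> v)"
    if "u \<in> vecs n" and "v \<in> vecs n" for u v
    using aut that by (simp add: eq alg_mult_in_vecs is_automorphism_def)
  ultimately show ?thesis
    using aut lin unfolding is_automorphism_def by blast
qed

lemma automorphism_basis_vec_nonzero:
  assumes aut: "is_automorphism n c \<phi>" and i: "i \<in> {1..n}"
  shows "\<phi> (basis_vec i) \<noteq> (\<lambda>k. 0)"
proof
  assume "\<phi> (basis_vec i) = (\<lambda>k. 0)"
  moreover have "\<phi> (\<lambda>k. 0) = (\<lambda>k. 0)"
    using aut linear_on_vecs_zero unfolding is_automorphism_def by blast
  moreover have "(\<lambda>k. 0) \<in> vecs n" by (simp add: vecs_def)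
  ultimately have "basis_vec i = (\<lambda>k. 0)"
    using aut basis_vec_in_vecs[OF i] unfolding is_automorphism_def bij_betw_def inj_on_def
    by metis
  then have "basis_vec i i = 0" by simp
  then show False by (simp add: basis_vec_def)
qed

lemma automorphism_mult_basis_vec:
  assumes aut: "is_automorphism n c \<phi>" and "i \<in> {1..n}" and "j \<in> {1..n}"
  shows "(\<Sum>l\<in>{1..n}. alg_mult n c (basis_vec i) (basis_vec j) l * \<phi> (basis_vec l) k)
    = alg_mult n c (\<phi> (basis_vec i)) (\<phi> (basis_vec j)) k"
proof -
  have lin: "linear_on_vecs n \<phi>"
    using aut unfolding is_automorphism_def by blast
  have "\<phi> (alg_mult n c (basis_vec i) (basis_vec j))
      = alg_mult n c (\<phi> (basis_vec i)) (\<phi> (basis_vec j))"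
    using aut assms(2,3) basis_vec_in_vecs unfolding is_automorphism_def by blast
  then have "\<phi> (alg_mult n c (basis_vec i) (basis_vec j)) k
      = alg_mult n c (\<phi> (basis_vec i)) (\<phi> (basis_vec j)) k"
    by simp
  then show ?thesis
    by (simp add: linear_on_vecs_expand[OF lin alg_mult_in_vecs])
qed

definition mult6 :: "complex \<Rightarrow> complex \<Rightarrow> (nat \<Rightarrow> complex) \<Rightarrow> (nat \<Rightarrow> complex) \<Rightarrow> nat \<Rightarrow> complex"
  where "mult6 \<alpha> \<beta> u v = (\<lambda>k.
    if k = 3 then u 1 * v 2 - u 2 * v 1
    else if k = 4 then u 2 * v 3 - u 3 * v 2
    else if k = 5 then \<alpha> * (u 1 * v 3 - u 3 * v 1) + (u 3 * v 4 - u 4 * v 3)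
    else if k = 6 then (u 4 * v 5 - u 5 * v 4) + \<beta> * (u 3 * v 5 - u 5 * v 3)
    else 0)"

lemma alg_mult_eq_mult6:
  assumes T: "in_Tprime 6 c"
    and "c 1 3 4 = 0" and "c 1 4 5 = 0" and "c 1 5 6 = 0" and "c 2 4 5 = 0"
    and "c 2 5 6 = 0" and "c 1 4 6 = 0" and "c 2 4 6 = 0" and "c 1 3 6 = 0"
  shows "alg_mult 6 c u v = mult6 (c 1 3 5) (c 3 5 6) u v"
proof -
  have anti: "c i j k = - c j i k" if "i \<in> {1..6}" "j \<in> {1..6}" "k \<in> {1..6}" "j < i" for i j k
    using T that unfolding in_Tprime_def by blast
  have upper: "c i j k = 0" if "i \<in> {1..6}" "j \<in> {1..6}" "k \<in> {1..6}" "k \<le> max i j" for i j k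
    using T that unfolding in_Tprime_def by blast
  have diag: "c i i k = 0" if "i \<in> {1..6}" "k \<in> {1..6}" for i k
  proof -
    have "c i i k = - c i i k"
      using T that unfolding in_Tprime_def by blast
    then show ?thesis by simp
  qed
  have chain: "c i (i + 1) k = (if k = i + 2 then 1 else 0)" if "1 \<le> i" "i \<le> 6 - 2" "k \<in> {1..6}" for i k
    using T that unfolding in_Tprime_def by blast
  have chain_vals: "c 1 2 3 = 1" "c 1 2 4 = 0" "c 1 2 5 = 0" "c 1 2 6 = 0"
    "c 2 3 4 = 1" "c 2 3 5 = 0" "c 2 3 6 = 0" "c 3 4 5 = 1" "c 3 4 6 = 0" "c 4 5 6 = 1"
    using chain[of 1] chain[of 2] chain[of 3] chain[of 4] by (simp_all del: One_nat_def)
  show ?thesis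
  proof
    fix k
    show "alg_mult 6 c u v k = mult6 (c 1 3 5) (c 3 5 6) u v k"
    proof (cases "k \<in> {1..6}")
      case True
      then show ?thesis
        using atLeastAtMost_1_6_cases[OF True] assms(2-)
        by (elim disjE) (simp_all add: alg_mult_def mult6_def sum_atLeastAtMost_1_6 upper anti
            diag chain_vals algebra_simps del: One_nat_def)
    qed (auto simp: alg_mult_def mult6_def)
  qed
qed

definition aut6 :: "complex \<Rightarrow> complex \<Rightarrow> complex \<Rightarrow> (nat \<Rightarrow> complex) \<Rightarrow> nat \<Rightarrow> complex"
  where "aut6 x a b u = (\<lambda>k.
    if k = 1 then x * u 1 else if k = 2 then u 2 else if k = 3 then x * u 3
    else if k = 4 then x * u 4 else if k = 5 then x\<^sup>2 * u 5
    else if k = 6 then a * u 1 + b * u 2 + x ^ 3 * u 6 else 0)"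

lemma aut6_in_vecs: "aut6 x a b u \<in> vecs 6"
  by (simp add: aut6_def vecs_def)

lemma aut6_basis_vec:
  "aut6 x a b (basis_vec 1) = (\<lambda>k. x * basis_vec 1 k + a * basis_vec 6 k)"
  "aut6 x a b (basis_vec 2) = (\<lambda>k. basis_vec 2 k + b * basis_vec 6 k)"
  "aut6 x a b (basis_vec 3) = (\<lambda>k. x * basis_vec 3 k)"
  "aut6 x a b (basis_vec 4) = (\<lambda>k. x * basis_vec 4 k)"
  "aut6 x a b (basis_vec 5) = (\<lambda>k. x\<^sup>2 * basis_vec 5 k)"
  "aut6 x a b (basis_vec 6) = (\<lambda>k. x ^ 3 * basis_vec 6 k)"
  by (simp_all add: aut6_def basis_vec_def fun_eq_iff)

lemma ball_atLeastAtMost_1_6_basis_vec_eq_aut6: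
  "(\<forall>i\<in>{1..6}. \<phi> (basis_vec i) = aut6 x a b (basis_vec i)) \<longleftrightarrow>
    \<phi> (basis_vec 1) = (\<lambda>k. x * basis_vec 1 k + a * basis_vec 6 k) \<and>
    \<phi> (basis_vec 2) = (\<lambda>k. basis_vec 2 k + b * basis_vec 6 k) \<and>
    \<phi> (basis_vec 3) = (\<lambda>k. x * basis_vec 3 k) \<and>
    \<phi> (basis_vec 4) = (\<lambda>k. x * basis_vec 4 k) \<and>
    \<phi> (basis_vec 5) = (\<lambda>k. x\<^sup>2 * basis_vec 5 k) \<and>
    \<phi> (basis_vec 6) = (\<lambda>k. x ^ 3 * basis_vec 6 k)"
  unfolding atLeastAtMost_1_6 by (simp only: ball_simps aut6_basis_vec simp_thms)

lemma linear_on_vecs_aut6: "linear_on_vecs 6 (aut6 x a b)"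
  unfolding linear_on_vecs_def by (simp add: aut6_def fun_eq_iff algebra_simps)

lemma aut6_mult6: "aut6 x a b (mult6 \<alpha> \<beta> u v) = mult6 \<alpha> \<beta> (aut6 x a b u) (aut6 x a b v)"
  by (simp add: fun_eq_iff aut6_def mult6_def algebra_simps power2_eq_square power3_eq_cube)

lemma bij_betw_aut6:
  assumes "x \<noteq> 0"
  shows "bij_betw (aut6 x a b) (vecs 6) (vecs 6)"
proof -
  let ?inv = "aut6 (1 / x) (- (a / x ^ 4)) (- (b / x ^ 3))"
  have left: "?inv (aut6 x a b u) = u" if "u \<in> vecs 6" for u
  proof (rule vecs_eqI[OF aut6_in_vecs that])
    show "?inv (aut6 x a b u) k = u k" if "k \<in> {1..6}" for k
      using assms atLeastAtMost_1_6_cases[OF that] by (auto simp: aut6_def field_simps eval_nat_numeral ac_simps)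
  qed
  have right: "aut6 x a b (?inv w) = w" if "w \<in> vecs 6" for w
  proof (rule vecs_eqI[OF aut6_in_vecs that])
    show "aut6 x a b (?inv w) k = w k" if "k \<in> {1..6}" for k
      using assms atLeastAtMost_1_6_cases[OF that] by (auto simp: aut6_def field_simps eval_nat_numeral ac_simps)
  qed
  show ?thesis
    by (rule bij_betw_byWitness[where f' = ?inv]) (auto simp: left right aut6_in_vecs)
qed

lemma is_automorphism_aut6:
  assumes "\<And>u v. alg_mult 6 c u v = mult6 \<alpha> \<beta> u v" and "x \<noteq> 0"
  shows "is_automorphism 6 c (aut6 x a b)"
  unfolding is_automorphism_def
  using assms by (simp add: linear_on_vecs_aut6 bij_betw_aut6 aut6_mult6)

(* m i k is the e(k)-coordinate of the image of e(i); hom says that the linear map with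
   matrix m preserves the products of basis vectors. *)
lemma mult6_hom_matrix_triangular:
  fixes m :: "nat \<Rightarrow> nat \<Rightarrow> complex"
  assumes hom: "\<And>i j k. i \<in> {1..6} \<Longrightarrow> j \<in> {1..6} \<Longrightarrow>
    (\<Sum>l=1..6. mult6 \<alpha> \<beta> (basis_vec i) (basis_vec j) l * m l k) = mult6 \<alpha> \<beta> (m i) (m j) k"
  shows "m 3 1 = 0" "m 3 2 = 0" "m 3 3 = m 1 1 * m 2 2 - m 1 2 * m 2 1"
    and "m 4 1 = 0" "m 4 2 = 0" "m 4 3 = 0" "m 4 4 = m 2 2 * m 3 3"
    and "m 5 1 = 0" "m 5 2 = 0" "m 5 3 = 0" "m 5 4 = 0" "m 5 5 = m 3 3 * m 4 4"
    and "m 6 1 = 0" "m 6 2 = 0" "m 6 3 = 0" "m 6 4 = 0" "m 6 5 = 0" "m 6 6 = m 4 4 * m 5 5"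
proof -
  note defs = sum_atLeastAtMost_1_6 mult6_def basis_vec_def
  show row3: "m 3 1 = 0" "m 3 2 = 0" "m 3 3 = m 1 1 * m 2 2 - m 1 2 * m 2 1"
    using hom[of 1 2 1] hom[of 1 2 2] hom[of 1 2 3] by (simp_all add: defs del: One_nat_def)
  show row4: "m 4 1 = 0" "m 4 2 = 0" "m 4 3 = 0" "m 4 4 = m 2 2 * m 3 3"
    using hom[of 2 3 1] hom[of 2 3 2] hom[of 2 3 3] hom[of 2 3 4] row3
    by (simp_all add: defs del: One_nat_def)
  show row5: "m 5 1 = 0" "m 5 2 = 0" "m 5 3 = 0" "m 5 4 = 0" "m 5 5 = m 3 3 * m 4 4"
    using hom[of 3 4 1] hom[of 3 4 2] hom[of 3 4 3] hom[of 3 4 4] hom[of 3 4 5] row3 row4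
    by (simp_all add: defs del: One_nat_def)
  show "m 6 1 = 0" "m 6 2 = 0" "m 6 3 = 0" "m 6 4 = 0" "m 6 5 = 0" "m 6 6 = m 4 4 * m 5 5"
    using hom[of 4 5 1] hom[of 4 5 2] hom[of 4 5 3] hom[of 4 5 4] hom[of 4 5 5] hom[of 4 5 6]
      row4 row5
    by (simp_all add: defs del: One_nat_def)
qed

lemma mult6_hom_matrix_diagonal:
  fixes m :: "nat \<Rightarrow> nat \<Rightarrow> complex"
  assumes hom: "\<And>i j k. i \<in> {1..6} \<Longrightarrow> j \<in> {1..6} \<Longrightarrow>
    (\<Sum>l=1..6. mult6 \<alpha> \<beta> (basis_vec i) (basis_vec j) l * m l k) = mult6 \<alpha> \<beta> (m i) (m j) k"
    and \<alpha>: "\<alpha> \<noteq> 0" and \<beta>: "\<beta> \<noteq> 0" and m66: "m 6 6 \<noteq> 0"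
  shows "m 1 1 \<noteq> 0" "m 2 2 = 1" "m 3 3 = m 1 1" "m 4 4 = m 1 1"
    and "m 1 2 = 0" "m 1 3 = 0" "m 2 3 = 0" "m 1 4 = 0" "m 2 4 = 0"
    and "m 3 4 = 0" "m 3 5 = 0" "m 3 6 = 0"
proof -
  note defs = sum_atLeastAtMost_1_6 mult6_def basis_vec_def
  note tri = mult6_hom_matrix_triangular[OF hom]
  have nz: "m 2 2 \<noteq> 0" "m 3 3 \<noteq> 0" "m 4 4 \<noteq> 0" "m 5 5 \<noteq> 0"
    using m66 tri by auto
  show col3: "m 1 3 = 0" "m 2 3 = 0"
    using hom[of 1 4 5] hom[of 2 4 5] tri nz by (simp_all add: defs del: One_nat_def)
  show col4: "m 1 4 = 0" "m 2 4 = 0"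
    using hom[of 1 5 6] hom[of 2 5 6] tri col3 nz by (simp_all add: defs del: One_nat_def)
  show "m 3 4 = 0" "m 3 5 = 0" "m 3 6 = 0"
    using hom[of 1 2 4] hom[of 1 2 5] hom[of 1 2 6] col3 col4 by (simp_all add: defs del: One_nat_def)
  then have "m 6 6 = m 3 3 * m 5 5"
    using hom[of 3 5 6] tri \<beta> by (simp add: defs del: One_nat_def)
  then have m44: "m 4 4 = m 3 3"
    using tri(18) nz(4) by simp
  then show m22: "m 2 2 = 1"
    using tri(7) nz(2) by simp
  show m12: "m 1 2 = 0"
    using hom[of 1 3 4] tri col3 nz by (simp add: defs del: One_nat_def)
  then show m33: "m 3 3 = m 1 1"
    using tri(3) m22 by simp
  then show "m 1 1 \<noteq> 0"
    using nz(2) by simp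
  show "m 4 4 = m 1 1"
    using m44 m33 by simp
qed

lemma mult6_hom_matrix_eq_aut6:
  fixes m :: "nat \<Rightarrow> nat \<Rightarrow> complex"
  assumes hom: "\<And>i j k. i \<in> {1..6} \<Longrightarrow> j \<in> {1..6} \<Longrightarrow>
    (\<Sum>l=1..6. mult6 \<alpha> \<beta> (basis_vec i) (basis_vec j) l * m l k) = mult6 \<alpha> \<beta> (m i) (m j) k"
    and \<alpha>: "\<alpha> \<noteq> 0" and \<beta>: "\<beta> \<noteq> 0" and m66: "m 6 6 \<noteq> 0"
  shows "\<forall>i\<in>{1..6}. \<forall>k\<in>{1..6}. m i k = aut6 (m 1 1) (m 1 6) (m 2 6) (basis_vec i) k"
proof -
  note defs = sum_atLeastAtMost_1_6 mult6_def basis_vec_def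
  note tri = mult6_hom_matrix_triangular[OF hom]
  note diag = mult6_hom_matrix_diagonal[OF hom \<alpha> \<beta> m66]
  have col5: "m 1 5 = 0" "m 2 5 = 0"
    using hom[of 1 4 6] hom[of 2 4 6] tri diag by (simp_all add: defs del: One_nat_def)
  have m45: "m 4 5 = \<alpha> * m 2 1 * m 1 1"
    using hom[of 2 3 5] tri diag by (simp add: defs del: One_nat_def)
  have m46: "m 4 6 = 0"
    using hom[of 2 3 6] diag col5 by (simp add: defs del: One_nat_def)
  have m56: "m 5 6 = 0"
    using hom[of 1 3 6] diag col5 \<alpha> by (simp add: defs del: One_nat_def)
  moreover have "m 5 6 = \<beta> * m 3 3 * m 4 5"
    using hom[of 3 4 6] tri diag by (simp add: defs del: One_nat_def)
  ultimately have m21: "m 2 1 = 0"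
    using m45 diag \<alpha> \<beta> by simp
  show ?thesis
    unfolding atLeastAtMost_1_6
    using tri diag col5 m45 m46 m56 m21
    by (simp add: aut6_def basis_vec_def power2_eq_square power3_eq_cube del: One_nat_def)
qed

lemma automorphism_eq_aut6_on_basis:
  assumes alg: "\<And>u v. alg_mult 6 c u v = mult6 \<alpha> \<beta> u v"
    and \<alpha>: "\<alpha> \<noteq> 0" and \<beta>: "\<beta> \<noteq> 0" and aut: "is_automorphism 6 c \<phi>"
  shows "\<exists>x a b. x \<noteq> 0 \<and> (\<forall>i\<in>{1..6}. \<phi> (basis_vec i) = aut6 x a b (basis_vec i))"
proof -
  define m where "m i k = \<phi> (basis_vec i) k" for i k
  have image: "\<phi> (basis_vec i) \<in> vecs 6" if "i \<in> {1..6}" for i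
    using aut basis_vec_in_vecs[OF that] unfolding is_automorphism_def bij_betw_def by blast
  have hom: "(\<Sum>l=1..6. mult6 \<alpha> \<beta> (basis_vec i) (basis_vec j) l * m l k) = mult6 \<alpha> \<beta> (m i) (m j) k"
    if "i \<in> {1..6}" and "j \<in> {1..6}" for i j k
    using automorphism_mult_basis_vec[OF aut that, of k] unfolding alg m_def by simp
  note tri = mult6_hom_matrix_triangular[OF hom]
  have "m 6 6 \<noteq> 0"
  proof
    assume "m 6 6 = 0"
    then have "\<phi> (basis_vec 6) k = 0" if "k \<in> {1..6}" for k
      using atLeastAtMost_1_6_cases[OF that] tri(13-17) unfolding m_def
      by (elim disjE) simp_all
    then have "\<phi> (basis_vec 6) = (\<lambda>k. 0)"
      by (intro vecs_eqI[OF image]) (auto simp: vecs_def)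
    then show False
      using automorphism_basis_vec_nonzero[OF aut] by simp
  qed
  note entries = mult6_hom_matrix_eq_aut6[OF hom \<alpha> \<beta> this]
    mult6_hom_matrix_diagonal(1)[OF hom \<alpha> \<beta> this]
  show ?thesis
  proof (intro exI conjI ballI)
    show "m 1 1 \<noteq> 0" by (rule entries(2))
    show "\<phi> (basis_vec i) = aut6 (m 1 1) (m 1 6) (m 2 6) (basis_vec i)" if "i \<in> {1..6}" for i
    proof (rule vecs_eqI[OF image[OF that] aut6_in_vecs])
      show "\<phi> (basis_vec i) k = aut6 (m 1 1) (m 1 6) (m 2 6) (basis_vec i) k" if "k \<in> {1..6}" for k
        using entries(1) \<open>i \<in> {1..6}\<close> that unfolding m_def by blast
    qed
  qed
qed

lemma is_automorphism_iff_aut6_on_basis: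
  assumes alg: "\<And>u v. alg_mult 6 c u v = mult6 \<alpha> \<beta> u v" and "\<alpha> \<noteq> 0" and "\<beta> \<noteq> 0"
  shows "is_automorphism 6 c \<phi> \<longleftrightarrow> linear_on_vecs 6 \<phi> \<and>
    (\<exists>x a b. x \<noteq> 0 \<and> (\<forall>i\<in>{1..6}. \<phi> (basis_vec i) = aut6 x a b (basis_vec i)))"
proof
  assume "is_automorphism 6 c \<phi>"
  then show "linear_on_vecs 6 \<phi> \<and>
    (\<exists>x a b. x \<noteq> 0 \<and> (\<forall>i\<in>{1..6}. \<phi> (basis_vec i) = aut6 x a b (basis_vec i)))"
    using automorphism_eq_aut6_on_basis[OF assms] unfolding is_automorphism_def by blast
next
  assume "linear_on_vecs 6 \<phi> \<and>
    (\<exists>x a b. x \<noteq> 0 \<and> (\<forall>i\<in>{1..6}. \<phi> (basis_vec i) = aut6 x a b (basis_vec i)))"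
  then obtain x a b where lin: "linear_on_vecs 6 \<phi>" and "x \<noteq> 0"
    and basis: "\<forall>i\<in>{1..6}. \<phi> (basis_vec i) = aut6 x a b (basis_vec i)"
    by blast
  show "is_automorphism 6 c \<phi>"
  proof (rule is_automorphism_cong[OF is_automorphism_aut6[OF alg \<open>x \<noteq> 0\<close>] lin])
    show "\<phi> u = aut6 x a b u" if "u \<in> vecs 6" for u
      using linear_on_vecs_eqI[OF lin linear_on_vecs_aut6 _ that] basis by blast
  qed
qed

theorem mainTheorem16:
  fixes c :: "nat \<Rightarrow> nat \<Rightarrow> nat \<Rightarrow> complex"
  assumes "in_Tprime 6 c"
    and "c 1 3 4 = 0" and "c 1 4 5 = 0" and "c 1 5 6 = 0" and "c 2 4 5 = 0"
    and "c 2 5 6 = 0" and "c 1 4 6 = 0" and "c 2 4 6 = 0" and "c 1 3 6 = 0"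
    and "c 1 3 5 * c 3 5 6 \<noteq> 0"
  shows "is_automorphism 6 c \<phi> \<longleftrightarrow>
    (linear_on_vecs 6 \<phi> \<and>
     (\<exists>x a61 a62 :: complex. x \<noteq> 0 \<and>
        \<phi> (basis_vec 1) = (\<lambda>k. x * basis_vec 1 k + a61 * basis_vec 6 k) \<and>
        \<phi> (basis_vec 2) = (\<lambda>k. basis_vec 2 k + a62 * basis_vec 6 k) \<and>
        \<phi> (basis_vec 3) = (\<lambda>k. x * basis_vec 3 k) \<and>
        \<phi> (basis_vec 4) = (\<lambda>k. x * basis_vec 4 k) \<and>
        \<phi> (basis_vec 5) = (\<lambda>k. x\<^sup>2 * basis_vec 5 k) \<and>
        \<phi> (basis_vec 6) = (\<lambda>k. x ^ 3 * basis_vec 6 k)))"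
proof -
  have alg: "alg_mult 6 c u v = mult6 (c 1 3 5) (c 3 5 6) u v" for u v
    by (rule alg_mult_eq_mult6[OF assms(1-9)])
  have "c 1 3 5 \<noteq> 0" and "c 3 5 6 \<noteq> 0"
    using assms(10) by auto
  from is_automorphism_iff_aut6_on_basis[OF alg this] show ?thesis
    unfolding ball_atLeastAtMost_1_6_basis_vec_eq_aut6 .
qed

end
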